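(* Consider the symmetric robot rendezvous system $$\dot{x}_k(t)=\tfrac{1}{2}\big(x_{k-1}(t)+x_{k+1}(t)\big)-x_k(t),\quad k\in\mathbb{Z},\ t\ge0,$$ with initial constellation $x_0=(x_k(0))_{k\in\mathbb{Z}}\in\ell^\infty(\mathbb{Z})$. Then $x_0$ is good if and only if there exists $c\in\mathbb{C}$ such that $$\sup_{k\in\mathbb{Z}}\bigg|\frac{1}{n}\sum_{j=1}^n\frac{1}{2^j}\sum_{\ell=0}^j\binom{j}{\ell}x_{k-j+2\ell}(0)-c\bigg|\to0\quad\text{as } n\to\infty, \tag{$*$}$$ and in this case $\sup_{k\in\mathbb{Z}}|x_k(t)-c|\to0$ as $t\to\infty$. Furthermore, if the quantity on the left of $( * )$ is $O(n^{-1})$ as $n\to\infty$, then $\sup_{k\in\mathbb{Z}}|x_k(t)-c|=O(t^{-1})$ as $t\to\infty$.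
   Context: $\ell^\infty(\mathbb{Z})$ is the Banach space of bounded doubly infinite complex sequences with the supremum norm. $S$ denotes the right-shift $S(x_k)=(x_{k-1})$ and $S^{-1}$ the left-shift $S^{-1}(x_k)=(x_{k+1})$ on $\ell^\infty(\mathbb{Z})$. For $x_0\in\ell^\infty(\mathbb{Z})$, the solution of the system is $x(t)=(x_k(t))_{k\in\mathbb{Z}}=\exp\big(t(\tfrac12(S+S^{-1})-I)\big)x_0$, $t\ge0$. An initial constellation $x_0$ is called good if there exist constants $c_k\in\mathbb{C}$, $k\in\mathbb{Z}$, such that the corresponding solution satisfies $\sup_{k\in\mathbb{Z}}|x_k(t)-c_k|\to0$ as $t\to\infty$. $a(t)=O(b(t))$ means there is $C>0$ with $a(t)\le Cb(t)$ for all sufficiently large arguments. *)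

theory Defs
  imports "HOL-Analysis.Analysis" "HOL-Library.Landau_Symbols"
begin

text \<open>Elements of l-infinity over the integers are represented as functions
  int to complex with bounded range.\<close>

definition shiftR :: "(int \<Rightarrow> complex) \<Rightarrow> int \<Rightarrow> complex" where
  "shiftR x k = x (k - 1)"

definition shiftL :: "(int \<Rightarrow> complex) \<Rightarrow> int \<Rightarrow> complex" where
  "shiftL x k = x (k + 1)"

definition rdv_op :: "(int \<Rightarrow> complex) \<Rightarrow> int \<Rightarrow> complex" where
  "rdv_op x k = (shiftR x k + shiftL x k) / 2 - x k"

text \<open>Solution x(t) = exp(tA) x0, written out coordinatewise: the k-th coordinate of
  the (norm-convergent) operator exponential series applied to x0.\<close>
definition rdv_sol :: "(int \<Rightarrow> complex) \<Rightarrow> real \<Rightarrow> int \<Rightarrow> complex" where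
  "rdv_sol x0 t k = (\<Sum>n. complex_of_real (t ^ n / fact n) * (rdv_op ^^ n) x0 k)"

definition good :: "(int \<Rightarrow> complex) \<Rightarrow> bool" where
  "good x0 \<longleftrightarrow> (\<exists>c :: int \<Rightarrow> complex. uniform_limit UNIV (rdv_sol x0) c at_top)"

definition rdv_avg :: "(int \<Rightarrow> complex) \<Rightarrow> nat \<Rightarrow> int \<Rightarrow> complex" where
  "rdv_avg x0 n k = (1 / of_nat n) * (\<Sum>j=1..n. (1 / 2 ^ j) *
      (\<Sum>l=0..j. of_nat (j choose l) * x0 (k - int j + 2 * int l)))"

end

theory Submission
  imports Defs
begin

text \<open>
  Write \<open>T = (S + S\<^sup>-\<^sup>1)/2\<close>, so that \<open>x(t) = exp (t(T - 1)) x\<^sub>0\<close> and the averages in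
  \<open>(*)\<close> are the ergodic means \<open>M\<^sub>n = (T + \<dots> + T\<^sup>n)/n\<close> applied to \<open>x\<^sub>0\<close>.
  Since \<open>S\<close> and \<open>S\<^sup>-\<^sup>1\<close> commute, \<open>exp (t(T - 1))\<close> factorises into
  \<open>exp (t(S - 1)/2) exp (t(S\<^sup>-\<^sup>1 - 1)/2)\<close> and \<open>T - 1 = -(S - 1)(S\<^sup>-\<^sup>1 - 1)/2\<close>;
  for a contraction \<open>V\<close>, \<open>exp (s(V - 1)) (V - 1)\<close> is a series in \<open>V\<close> whose coefficients are the
  increments of the Poisson distribution with mean \<open>s\<close>, of total variation at most \<open>1/\<surd>s\<close>
  (a consequence of its variance being \<open>s\<close>). Hence
  \<open>\<parallel>exp (t(T - 1)) (T - 1)\<parallel> \<le> 1/t\<close>.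

  With this smoothing estimate, the identity \<open>1 = T M\<^sub>N - (T - 1)(1 + R\<^sub>N)\<close>, where \<open>R\<^sub>N\<close> is
  the mean of the first \<open>N\<close> power sums, shows that \<open>x(t)\<close> converges whenever \<open>M\<^sub>n x\<^sub>0\<close> does,
  and at rate \<open>1/t\<close> when \<open>M\<^sub>n x\<^sub>0\<close> converges at rate \<open>1/n\<close> (take \<open>N \<approx> t\<close>).
  Conversely a limit \<open>w\<close> of \<open>x(t)\<close> satisfies \<open>(T - 1) w = 0\<close>, so it is a bounded sequence
  with constant increments, i.e. constant; and \<open>M\<^sub>n x\<^sub>0 \<longrightarrow> w\<close> because
  \<open>(T - 1) M\<^sub>n = O(1/n)\<close> makes \<open>M\<^sub>n\<close> almost invariant under the semigroup.
\<close>

section \<open>Bounded operators as a Banach algebra\<close>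

text \<open>HOL-Analysis puts no multiplication on \<open>'a \<Rightarrow>\<^sub>L 'a\<close>; this copy, with composition as product,
  is a Banach algebra, so the library's \<open>exp\<close> applies to operators.\<close>
typedef (overloaded) 'a bop = "UNIV :: ('a::real_normed_vector \<Rightarrow>\<^sub>L 'a) set"
  morphisms blinfun_of_bop bop_of_blinfun ..

setup_lifting type_definition_bop

instantiation bop :: (real_normed_vector) real_normed_vector
begin
lift_definition norm_bop :: "'a bop \<Rightarrow> real" is norm .
lift_definition minus_bop :: "'a bop \<Rightarrow> 'a bop \<Rightarrow> 'a bop" is "(-)" .
lift_definition plus_bop :: "'a bop \<Rightarrow> 'a bop \<Rightarrow> 'a bop" is "(+)" .
lift_definition uminus_bop :: "'a bop \<Rightarrow> 'a bop" is uminus .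
lift_definition zero_bop :: "'a bop" is 0 .
lift_definition scaleR_bop :: "real \<Rightarrow> 'a bop \<Rightarrow> 'a bop" is scaleR .
definition dist_bop :: "'a bop \<Rightarrow> 'a bop \<Rightarrow> real" where "dist_bop a b = norm (a - b)"
definition sgn_bop :: "'a bop \<Rightarrow> 'a bop" where "sgn_bop x = inverse (norm x) *\<^sub>R x"
definition uniformity_bop :: "('a bop \<times> 'a bop) filter" where
  "uniformity_bop = (INF e\<in>{0<..}. principal {(x, y). dist x y < e})"
definition open_bop :: "'a bop set \<Rightarrow> bool" where
  "open_bop S = (\<forall>x\<in>S. \<forall>\<^sub>F (x', y) in uniformity. x' = x \<longrightarrow> y \<in> S)"
instance
  apply standard
  unfolding dist_bop_def open_bop_def sgn_bop_def uniformity_bop_def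
  apply (rule refl | (transfer, force simp: algebra_simps norm_triangle_ineq))+
  done
end

instantiation bop :: ("{real_normed_vector, perfect_space}") real_normed_algebra_1
begin
lift_definition times_bop :: "'a bop \<Rightarrow> 'a bop \<Rightarrow> 'a bop" is blinfun_compose .
lift_definition one_bop :: "'a bop" is id_blinfun .
lemma norm_one_bop: "norm (1 :: 'a bop) = 1"
  by transfer simp

instance
proof
  fix a b c :: "'a bop" and r :: real
  show "a * b * c = a * (b * c)" "1 * a = a" "a * 1 = a" "(a + b) * c = a * c + b * c"
    "a * (b + c) = a * b + a * c" "r *\<^sub>R a * b = r *\<^sub>R (a * b)" "a * r *\<^sub>R b = r *\<^sub>R (a * b)"
    by (transfer; auto intro!: blinfun_eqI simp: blinfun.bilinear_simps)+
  show "norm (a * b) \<le> norm a * norm b"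
    by transfer (rule norm_blinfun_compose)
  show "norm (1 :: 'a bop) = 1" by (fact norm_one_bop)
  show "(0 :: 'a bop) \<noteq> 1"
    using norm_one_bop by (metis norm_zero zero_neq_one)
qed
end

lemma dist_blinfun_of_bop: "dist (blinfun_of_bop X) (blinfun_of_bop Y) = dist X Y"
  by (simp add: dist_norm norm_bop.rep_eq minus_bop.rep_eq)

instance bop :: (banach) banach
proof
  fix X :: "nat \<Rightarrow> 'a bop"
  assume "Cauchy X"
  then have "Cauchy (\<lambda>n. blinfun_of_bop (X n))"
    by (simp add: Cauchy_def dist_blinfun_of_bop)
  then obtain L where "(\<lambda>n. blinfun_of_bop (X n)) \<longlonglongrightarrow> L"
    by (blast dest: Cauchy_convergent convergentD)
  then have "X \<longlonglongrightarrow> bop_of_blinfun L"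
    by (simp add: tendsto_iff flip: dist_blinfun_of_bop add: bop_of_blinfun_inverse)
  then show "convergent X" by (rule convergentI)
qed

lift_definition bop_apply :: "'a::real_normed_vector bop \<Rightarrow> 'a \<Rightarrow> 'a" is blinfun_apply .

lemma bop_apply_mult: "bop_apply (X * Y) u = bop_apply X (bop_apply Y u)"
  by transfer simp

lemma bop_apply_one [simp]: "bop_apply 1 u = u"
  by transfer simp

lemma bop_apply_zero [simp]: "bop_apply 0 u = 0"
  by transfer simp

lemma bop_apply_add: "bop_apply (X + Y) u = bop_apply X u + bop_apply Y u"
  by transfer (simp add: blinfun.bilinear_simps)

lemma bop_apply_diff: "bop_apply (X - Y) u = bop_apply X u - bop_apply Y u"
  by transfer (simp add: blinfun.bilinear_simps)

lemma bop_apply_scaleR: "bop_apply (r *\<^sub>R X) u = r *\<^sub>R bop_apply X u"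
  by transfer (simp add: blinfun.bilinear_simps)

lemma bop_apply_sum: "bop_apply (sum f I) u = (\<Sum>i\<in>I. bop_apply (f i) u)"
  by (induction I rule: infinite_finite_induct) (simp_all add: bop_apply_add)

lemma bop_apply_diff_right: "bop_apply X (u - v) = bop_apply X u - bop_apply X v"
  by transfer (simp add: blinfun.bilinear_simps)

lemma norm_bop_apply_le: "norm (bop_apply X u) \<le> norm X * norm u"
  by transfer (rule norm_blinfun)

lemma norm_bop_le_one: "(\<And>u. norm (bop_apply X u) \<le> norm u) \<Longrightarrow> norm X \<le> 1"
  by transfer (rule norm_blinfun_bound, auto)

lemma bop_eqI: "(\<And>u. bop_apply X u = bop_apply Y u) \<Longrightarrow> X = Y"
  by transfer (rule blinfun_eqI)

lemma bounded_linear_bop_apply: "bounded_linear (bop_apply X)"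
  by transfer (rule blinfun.bounded_linear_right)

lemma bounded_linear_bop_apply_left: "bounded_linear (\<lambda>X. bop_apply X u)"
  by (rule bounded_linear_intro[where K = "norm u"])
     (simp_all add: bop_apply_add bop_apply_scaleR norm_bop_apply_le mult.commute[of "norm u"])

section \<open>Exponentials of contractions\<close>

lemma sums_power_div_fact: "(\<lambda>n. s ^ n / fact n) sums exp (s :: real)"
  using exp_converges[of s] by (simp add: divide_inverse mult.commute)

lemma Suc_mult_power_div_fact:
  "real (Suc n) * (s ^ Suc n / fact (Suc n)) = s * (s ^ n / fact n)"
  by (simp del: of_nat_Suc add: field_simps)

lemma sums_mult_power_div_fact: "(\<lambda>n. real n * (s ^ n / fact n)) sums (s * exp (s :: real))"
proof -
  have "(\<lambda>n. real (Suc n) * (s ^ Suc n / fact (Suc n))) sums (s * exp s)"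
    unfolding Suc_mult_power_div_fact by (rule sums_mult[OF sums_power_div_fact])
  then show ?thesis
    by (subst (asm) sums_Suc_iff) simp
qed

lemma sums_square_mult_power_div_fact:
  "(\<lambda>n. (real n)\<^sup>2 * (s ^ n / fact n)) sums (s * (s + 1) * exp (s :: real))"
proof -
  have "(\<lambda>n. s * (real n * (s ^ n / fact n) + s ^ n / fact n)) sums (s * (s * exp s + exp s))"
    by (intro sums_add sums_mult sums_mult_power_div_fact sums_power_div_fact)
  moreover have "real (Suc n) * (real (Suc n) * (s ^ Suc n / fact (Suc n)))
      = s * (real n * (s ^ n / fact n) + s ^ n / fact n)" for n
    unfolding Suc_mult_power_div_fact by (simp add: algebra_simps add_divide_distrib)
  ultimately have "(\<lambda>n. real (Suc n) * (real (Suc n) * (s ^ Suc n / fact (Suc n))))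
      sums (s * (s * exp s + exp s))"
    by simp
  then show ?thesis
    by (subst (asm) sums_Suc_iff) (simp add: power2_eq_square algebra_simps)
qed

lemma sums_power_div_fact_variance:
  "(\<lambda>n. (s ^ n / fact n) * (real n - s)\<^sup>2) sums (s * exp (s :: real))"
proof -
  have "(\<lambda>n. (real n)\<^sup>2 * (s ^ n / fact n) - 2 * s * (real n * (s ^ n / fact n)) + s\<^sup>2 * (s ^ n / fact n))
      sums (s * (s + 1) * exp s - 2 * s * (s * exp s) + s\<^sup>2 * exp s)"
    by (intro sums_add sums_diff sums_mult sums_power_div_fact sums_mult_power_div_fact
        sums_square_mult_power_div_fact)
  then show ?thesis
    by (simp add: algebra_simps power2_eq_square)
qed

definition poisson_increment :: "real \<Rightarrow> nat \<Rightarrow> real" where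
  "poisson_increment s n = (if n = 0 then 0 else s ^ (n - 1) / fact (n - 1)) - s ^ n / fact n"

lemma abs_poisson_increment:
  assumes "s > 0"
  shows "\<bar>poisson_increment s n\<bar> = (s ^ n / fact n) * (\<bar>real n - s\<bar> / s)"
proof (cases n)
  case (Suc m)
  have "real n * (s ^ n / fact n) = s * (s ^ m / fact m)"
    using Suc_mult_power_div_fact[of m s] Suc by simp
  then have "s ^ m / fact m = real n * (s ^ n / fact n) / s"
    using assms by (simp add: field_simps)
  then have "poisson_increment s n = real n * (s ^ n / fact n) / s - s ^ n / fact n"
    by (simp add: poisson_increment_def Suc)
  also have "\<dots> = (s ^ n / fact n) * ((real n - s) / s)"
    using assms by (simp add: field_simps)
  finally have "poisson_increment s n = (s ^ n / fact n) * ((real n - s) / s)" .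
  then show ?thesis
    using assms by (simp add: abs_mult)
qed (use assms in \<open>simp add: poisson_increment_def\<close>)

lemma div_le_quadratic_bound:
  assumes "s > 0"
  shows "x / s \<le> (x\<^sup>2 / (s * sqrt s) + 1 / sqrt s) / 2"
proof -
  have "2 * x * sqrt s \<le> x\<^sup>2 + s"
    using sum_squares_bound[of x "sqrt s"] assms by (simp add: power2_eq_square)
  then have "2 * x * sqrt s / (2 * s * sqrt s) \<le> (x\<^sup>2 + s) / (2 * s * sqrt s)"
    using assms by (intro divide_right_mono) auto
  then show ?thesis
    using assms by (simp add: field_simps)
qed

text \<open>By the AM-GM inequality the increments are dominated by a combination of the Poisson
  weights and their second central moments, whose sums are known.\<close>
lemma poisson_increment_summable_bound:
  assumes "s > 0"
  shows "summable (\<lambda>n. \<bar>poisson_increment s n\<bar>)"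
    and "(\<Sum>n. \<bar>poisson_increment s n\<bar>) \<le> exp s / sqrt s"
proof -
  define g where "g n = ((s ^ n / fact n) * (real n - s)\<^sup>2 / (s * sqrt s) + (s ^ n / fact n) / sqrt s) / 2"
    for n
  have "g sums ((s * exp s / (s * sqrt s) + exp s / sqrt s) / 2)"
    unfolding g_def
    by (intro sums_divide sums_add sums_power_div_fact_variance sums_power_div_fact)
  then have g: "g sums (exp s / sqrt s)"
    using assms by simp
  have le: "\<bar>poisson_increment s n\<bar> \<le> g n" for n
  proof -
    have "\<bar>poisson_increment s n\<bar>
        \<le> (s ^ n / fact n) * ((\<bar>real n - s\<bar>\<^sup>2 / (s * sqrt s) + 1 / sqrt s) / 2)"
      unfolding abs_poisson_increment[OF assms]
      using assms by (intro mult_left_mono div_le_quadratic_bound) auto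
    also have "\<dots> = g n"
      by (simp only: g_def power2_abs distrib_left add_divide_distrib times_divide_eq_right
          mult_1_right)
    finally show ?thesis .
  qed
  show summable: "summable (\<lambda>n. \<bar>poisson_increment s n\<bar>)"
    using le by (intro summable_comparison_test'[OF sums_summable[OF g]]) auto
  show "(\<Sum>n. \<bar>poisson_increment s n\<bar>) \<le> exp s / sqrt s"
    using suminf_le[OF le summable sums_summable[OF g]] sums_unique[OF g] by simp
qed

lemma exp_scaleR_mult_diff_one_sums:
  fixes V :: "'a::{real_normed_algebra_1,banach}"
  shows "(\<lambda>n. poisson_increment s n *\<^sub>R V ^ n) sums (exp (s *\<^sub>R V) * (V - 1))"
proof -
  have exp: "(\<lambda>n. (s ^ n / fact n) *\<^sub>R V ^ n) sums exp (s *\<^sub>R V)"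
    using exp_converges[of "s *\<^sub>R V"] by (simp add: divide_inverse mult.commute)
  have "(\<lambda>n. (s ^ n / fact n) *\<^sub>R V ^ Suc n) sums (exp (s *\<^sub>R V) * V)"
    using sums_mult2[OF exp, of V] by (simp add: power_commutes)
  then have "(\<lambda>n. (if Suc n = 0 then 0 else s ^ (Suc n - 1) / fact (Suc n - 1)) *\<^sub>R V ^ Suc n)
      sums (exp (s *\<^sub>R V) * V)"
    by simp
  then have "(\<lambda>n. (if n = 0 then 0 else s ^ (n - 1) / fact (n - 1)) *\<^sub>R V ^ n)
      sums (exp (s *\<^sub>R V) * V)"
    by (subst (asm) sums_Suc_iff) simp
  from sums_diff[OF this exp] show ?thesis
    by (simp add: poisson_increment_def scaleR_diff_left right_diff_distrib)
qed

lemma norm_exp_scaleR_mult_diff_one_le: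
  fixes V :: "'a::{real_normed_algebra_1,banach}"
  assumes V: "norm V \<le> 1" and s: "s > 0"
  shows "norm (exp (s *\<^sub>R V) * (V - 1)) \<le> exp s / sqrt s"
proof -
  have le: "norm (poisson_increment s n *\<^sub>R V ^ n) \<le> \<bar>poisson_increment s n\<bar>" for n
    using V norm_power_ineq[of V n] power_le_one[of "norm V" n]
    by (simp add: mult_left_le)
  have summable: "summable (\<lambda>n. norm (poisson_increment s n *\<^sub>R V ^ n))"
    using le by (intro summable_comparison_test'[OF poisson_increment_summable_bound(1)[OF s]]) auto
  have "norm (exp (s *\<^sub>R V) * (V - 1)) = norm (\<Sum>n. poisson_increment s n *\<^sub>R V ^ n)"
    by (metis exp_scaleR_mult_diff_one_sums sums_unique)
  also have "\<dots> \<le> (\<Sum>n. norm (poisson_increment s n *\<^sub>R V ^ n))"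
    by (rule summable_norm[OF summable])
  also have "\<dots> \<le> (\<Sum>n. \<bar>poisson_increment s n\<bar>)"
    by (rule suminf_le[OF le summable poisson_increment_summable_bound(1)[OF s]])
  finally show ?thesis
    using poisson_increment_summable_bound(2)[OF s] by simp
qed

lemma exp_scaleR_diff_one:
  fixes V :: "'a::{real_normed_algebra_1,banach}"
  shows "exp (s *\<^sub>R (V - 1)) = exp (- s) *\<^sub>R exp (s *\<^sub>R V)"
proof -
  have "exp (s *\<^sub>R (V - 1)) = exp (s *\<^sub>R V + of_real (- s))"
    by (simp add: of_real_def scaleR_diff_right)
  also have "\<dots> = exp (s *\<^sub>R V) * exp (of_real (- s))"
    by (rule exp_add_commuting) (simp add: of_real_def)
  also have "\<dots> = exp (s *\<^sub>R V) * of_real (exp (- s))"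
    by (simp only: exp_of_real)
  finally show ?thesis
    by (simp add: of_real_def)
qed

lemma norm_exp_scaleR_diff_one_le:
  fixes V :: "'a::{real_normed_algebra_1,banach}"
  assumes "norm V \<le> 1" and "s \<ge> 0"
  shows "norm (exp (s *\<^sub>R (V - 1))) \<le> 1"
proof -
  have "norm (exp (s *\<^sub>R V)) \<le> exp s"
    using norm_exp[of "s *\<^sub>R V"] assms by (simp add: mult_left_le order_trans)
  then have "exp (- s) * norm (exp (s *\<^sub>R V)) \<le> exp (- s) * exp s"
    by (intro mult_left_mono) auto
  then show ?thesis
    by (simp add: exp_scaleR_diff_one exp_minus)
qed

lemma norm_exp_scaleR_diff_one_mult_le:
  fixes V :: "'a::{real_normed_algebra_1,banach}"
  assumes "norm V \<le> 1" and "s > 0"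
  shows "norm (exp (s *\<^sub>R (V - 1)) * (V - 1)) \<le> 1 / sqrt s"
proof -
  have "exp (- s) * norm (exp (s *\<^sub>R V) * (V - 1)) \<le> exp (- s) * (exp s / sqrt s)"
    using assms by (intro mult_left_mono norm_exp_scaleR_mult_diff_one_le) auto
  then show ?thesis
    by (simp add: exp_scaleR_diff_one exp_minus)
qed

lemma exp_mult_commute:
  fixes x y :: "'a::{real_normed_algebra_1,banach}"
  assumes "x * y = y * x"
  shows "exp x * y = y * exp x"
proof -
  have "exp x * y = (\<Sum>n. (x ^ n /\<^sub>R fact n) * y)"
    unfolding exp_def by (rule suminf_mult2[OF summable_exp_generic])
  also have "\<dots> = (\<Sum>n. y * (x ^ n /\<^sub>R fact n))"
    using power_commuting_commutes[OF assms] by simp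
  also have "\<dots> = y * exp x"
    unfolding exp_def by (rule suminf_mult[OF summable_exp_generic])
  finally show ?thesis .
qed

text \<open>With \<open>S\<close> and \<open>L\<close> commuting and inverse to each other,
  \<open>(S + L)/2 - 1 = -(S - 1)(L - 1)/2\<close> and the exponential factorises, so the bound
  \<open>1/\<surd>(t/2)\<close> of each factor yields \<open>1/t\<close>.\<close>
lemma norm_exp_mean_diff_one_mult_le:
  fixes S L :: "'a::{real_normed_algebra_1,banach}"
  defines "T \<equiv> (1/2) *\<^sub>R (S + L)"
  assumes S: "norm S \<le> 1" and L: "norm L \<le> 1" and SL: "S * L = 1" and LS: "L * S = 1"
    and t: "t > 0"
  shows "norm (exp (t *\<^sub>R (T - 1)) * (T - 1)) \<le> 1 / t"
proof -
  let ?eS = "exp ((t/2) *\<^sub>R (S - 1))" and ?eL = "exp ((t/2) *\<^sub>R (L - 1))"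
  have comm: "(S - 1) * (L - 1) = (L - 1) * (S - 1)"
    by (simp add: algebra_simps SL LS)
  have "t *\<^sub>R (T - 1) = (t/2) *\<^sub>R (S - 1) + (t/2) *\<^sub>R (L - 1)"
    by (simp add: T_def algebra_simps flip: scaleR_2)
  then have exp: "exp (t *\<^sub>R (T - 1)) = ?eS * ?eL"
    by (simp add: exp_add_commuting comm)
  have "T - 1 = (- 1/2) *\<^sub>R ((S - 1) * (L - 1))"
    by (simp add: T_def algebra_simps SL flip: scaleR_2)
  moreover have "?eL * (S - 1) = (S - 1) * ?eL"
    by (rule exp_mult_commute) (simp add: comm)
  ultimately have "exp (t *\<^sub>R (T - 1)) * (T - 1) = (- 1/2) *\<^sub>R ((?eS * (S - 1)) * (?eL * (L - 1)))"
    unfolding exp by (simp add: mult.assoc flip: mult.assoc[of ?eL])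
  then have "norm (exp (t *\<^sub>R (T - 1)) * (T - 1)) \<le> (1/2) * (norm (?eS * (S - 1)) * norm (?eL * (L - 1)))"
    by (simp add: norm_mult_ineq)
  also have "\<dots> \<le> (1/2) * ((1 / sqrt (t/2)) * (1 / sqrt (t/2)))"
    using S L t by (intro mult_left_mono mult_mono norm_exp_scaleR_diff_one_mult_le) auto
  also have "\<dots> = 1 / t"
    using t by (simp add: real_sqrt_divide field_simps)
  finally show ?thesis .
qed

section \<open>Contractions with a smoothing semigroup\<close>

lemma tendsto_const_div_at_top: "((\<lambda>t. c / t) \<longlongrightarrow> 0) (at_top :: real filter)"
  by (rule tendsto_divide_0[OF tendsto_const filterlim_at_top_imp_at_infinity[OF filterlim_ident]])

text \<open>The second assumption is the smoothing estimate of a bounded analytic semigroup;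
  together with \<open>norm T \<le> 1\<close> it is all the ergodic argument uses.\<close>
locale analytic_contraction =
  fixes T :: "'a::{banach, perfect_space} bop"
  assumes norm_le_one: "norm T \<le> 1"
    and norm_exp_mult_generator_le: "t > 0 \<Longrightarrow> norm (exp (t *\<^sub>R (T - 1)) * (T - 1)) \<le> 1 / t"
begin

definition semigroup :: "real \<Rightarrow> 'a bop" where
  "semigroup t = exp (t *\<^sub>R (T - 1))"

definition power_sum :: "nat \<Rightarrow> 'a bop" where
  "power_sum n = (\<Sum>j=1..n. T ^ j)"

definition ergodic_mean :: "nat \<Rightarrow> 'a bop" where
  "ergodic_mean n = (1 / real n) *\<^sub>R power_sum n"

definition mean_power_sum :: "nat \<Rightarrow> 'a bop" where
  "mean_power_sum N = (1 / real N) *\<^sub>R (\<Sum>n=1..N. power_sum n)"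

lemma norm_semigroup_le: "t \<ge> 0 \<Longrightarrow> norm (semigroup t) \<le> 1"
  unfolding semigroup_def by (rule norm_exp_scaleR_diff_one_le[OF norm_le_one])

lemma norm_power_le: "norm (T ^ n) \<le> 1"
  by (meson order_trans norm_ge_zero norm_le_one norm_power_ineq power_le_one)

lemma norm_power_sum_le: "norm (power_sum n) \<le> real n"
proof -
  have "norm (power_sum n) \<le> (\<Sum>j=1..n. norm (T ^ j))"
    unfolding power_sum_def by (rule norm_sum)
  also have "\<dots> \<le> (\<Sum>j=1..n. 1)"
    by (intro sum_mono norm_power_le)
  finally show ?thesis by simp
qed

lemma norm_ergodic_mean_le: "norm (ergodic_mean n) \<le> 1"
  using norm_power_sum_le[of n] by (simp add: ergodic_mean_def divide_le_eq)

lemma generator_mult_power_sum: "(T - 1) * power_sum n = T ^ Suc n - T"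
  by (induction n) (simp_all add: power_sum_def algebra_simps)

lemma norm_generator_mult_ergodic_mean_le: "norm ((T - 1) * ergodic_mean n) \<le> 2 / real n"
proof -
  have "norm (T ^ Suc n - T) \<le> 2"
    using norm_triangle_ineq4[of "T ^ Suc n" T] norm_power_le[of "Suc n"] norm_le_one by linarith
  then show ?thesis
    by (simp add: ergodic_mean_def generator_mult_power_sum divide_right_mono)
qed

lemma semigroup_mult_commute: "semigroup t * T = T * semigroup t"
  using exp_times_scaleR_commute[of t "T - 1"] by (simp add: semigroup_def algebra_simps)

lemma semigroup_ergodic_mean_commute: "semigroup t * ergodic_mean n = ergodic_mean n * semigroup t"
  by (simp add: ergodic_mean_def power_sum_def sum_distrib_left sum_distrib_right
      power_commuting_commutes[OF semigroup_mult_commute[symmetric]])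

lemma norm_semigroup_apply_diff_le:
  assumes "t \<ge> 0"
  shows "norm (bop_apply (semigroup t) v - v) \<le> t * norm (bop_apply (T - 1) v)"
proof -
  let ?f' = "\<lambda>s h. h *\<^sub>R bop_apply (semigroup s * (T - 1)) v"
  have "((\<lambda>s. bop_apply (semigroup s) v) has_derivative ?f' s) (at s within {0..t})" for s
    using bounded_linear.has_vector_derivative[OF bounded_linear_bop_apply_left
        exp_scaleR_has_vector_derivative_right]
    by (simp add: semigroup_def has_vector_derivative_def)
  moreover have "onorm (?f' s) \<le> norm (bop_apply (T - 1) v)" if "s \<in> {0..t}" for s
  proof (rule onorm_bound)
    fix h :: real
    have "norm (bop_apply (semigroup s * (T - 1)) v) \<le> norm (semigroup s) * norm (bop_apply (T - 1) v)"
      unfolding bop_apply_mult by (rule norm_bop_apply_le)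
    also have "\<dots> \<le> norm (bop_apply (T - 1) v)"
      using that norm_semigroup_le[of s] by (simp add: mult_left_le_one_le)
    finally show "norm (?f' s h) \<le> norm (bop_apply (T - 1) v) * norm h"
      by (simp add: mult.commute mult_left_mono)
  qed simp
  ultimately have "norm (bop_apply (semigroup t) v - bop_apply (semigroup 0) v)
      \<le> norm (bop_apply (T - 1) v) * norm (t - 0)"
    using assms by (intro differentiable_bound[where S = "{0..t}"]) auto
  then show ?thesis
    using assms by (simp add: semigroup_def mult.commute)
qed

lemma semigroup_apply_fixed:
  assumes "bop_apply T v = v" and "t \<ge> 0"
  shows "bop_apply (semigroup t) v = v"
  using norm_semigroup_apply_diff_le[OF assms(2), of v] assms(1) by (simp add: bop_apply_diff)

lemma ergodic_mean_apply_fixed: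
  assumes "bop_apply T v = v" and "n \<ge> 1"
  shows "bop_apply (ergodic_mean n) v = v"
proof -
  have "bop_apply (T ^ j) v = v" for j
    by (induction j) (simp_all add: bop_apply_mult assms(1))
  then show ?thesis
    using assms(2) by (simp add: ergodic_mean_def power_sum_def bop_apply_scaleR bop_apply_sum
        sum_constant_scaleR)
qed

text \<open>Since \<open>(T - 1) R\<^sub>N = T M\<^sub>N - T\<close> for the mean \<open>R\<^sub>N\<close> of the power sums, the identity
  \<open>1 = T M\<^sub>N - (T - 1)(1 + R\<^sub>N)\<close> splits the semigroup into a part damped like \<open>1/t\<close> and a part
  controlled by the ergodic mean \<open>M\<^sub>N\<close>.\<close>
lemma semigroup_decomposition:
  assumes "N \<ge> 1"
  shows "semigroup t = semigroup t * T * ergodic_mean N - semigroup t * (T - 1) * (1 + mean_power_sum N)"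
proof -
  have "(T - 1) * mean_power_sum N = (1 / real N) *\<^sub>R (\<Sum>n=1..N. T ^ Suc n - T)"
    by (simp add: mean_power_sum_def sum_distrib_left generator_mult_power_sum)
  also have "\<dots> = T * ergodic_mean N - T"
    using assms by (simp add: ergodic_mean_def power_sum_def sum_subtractf sum_distrib_left
        scaleR_diff_right sum_constant_scaleR del: sum_constant)
  finally have "1 = T * ergodic_mean N - (T - 1) * (1 + mean_power_sum N)"
    by (simp add: algebra_simps)
  then show ?thesis
    by (metis mult.assoc mult.right_neutral right_diff_distrib)
qed

lemma norm_semigroup_apply_le:
  assumes "N \<ge> 1" and "t > 0"
  shows "norm (bop_apply (semigroup t) u)
    \<le> norm (u + bop_apply (mean_power_sum N) u) / t + norm (bop_apply (ergodic_mean N) u)"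
proof -
  have "norm (bop_apply (semigroup t) u)
      \<le> norm (bop_apply (semigroup t * T) (bop_apply (ergodic_mean N) u))
        + norm (bop_apply (semigroup t * (T - 1)) (u + bop_apply (mean_power_sum N) u))"
    by (subst semigroup_decomposition[OF assms(1)])
       (simp add: bop_apply_diff bop_apply_mult bop_apply_add norm_triangle_ineq4)
  also have "\<dots> \<le> 1 * norm (bop_apply (ergodic_mean N) u) + 1 / t * norm (u + bop_apply (mean_power_sum N) u)"
  proof -
    have "norm (semigroup t * T) \<le> 1"
      using assms(2) norm_mult_ineq[of "semigroup t" T] norm_semigroup_le[of t] norm_le_one
      by (meson mult_le_one norm_ge_zero order_trans less_imp_le)
    moreover have "norm (semigroup t * (T - 1)) \<le> 1 / t"
      using norm_exp_mult_generator_le[OF assms(2)] by (simp add: semigroup_def)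
    ultimately show ?thesis
      by (intro add_mono order_trans[OF norm_bop_apply_le] mult_right_mono) auto
  qed
  finally show ?thesis
    by simp
qed

lemma tendsto_semigroup_apply_zero:
  assumes "((\<lambda>n. bop_apply (ergodic_mean n) u) \<longlongrightarrow> 0) sequentially"
  shows "((\<lambda>t. bop_apply (semigroup t) u) \<longlongrightarrow> 0) at_top"
proof (rule tendstoI)
  fix e :: real
  assume "e > 0"
  have "eventually (\<lambda>n. n \<ge> 1 \<and> norm (bop_apply (ergodic_mean n) u) < e/2) sequentially"
    using tendstoD[OF assms half_gt_zero[OF \<open>e > 0\<close>]] eventually_ge_at_top[of 1]
    by eventually_elim simp
  then obtain N where N: "N \<ge> 1" "norm (bop_apply (ergodic_mean N) u) < e/2"
    using eventually_happens'[OF sequentially_bot] by blast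
  define K where "K = norm (u + bop_apply (mean_power_sum N) u)"
  have "eventually (\<lambda>t. t > 0 \<and> K / t < e/2) at_top"
    using eventually_gt_at_top[of 0]
      order_tendstoD(2)[OF tendsto_const_div_at_top[of K] half_gt_zero[OF \<open>e > 0\<close>]]
    by eventually_elim simp
  then show "eventually (\<lambda>t. dist (bop_apply (semigroup t) u) 0 < e) at_top"
  proof eventually_elim
    case (elim t)
    then have "norm (bop_apply (semigroup t) u) \<le> K / t + norm (bop_apply (ergodic_mean N) u)"
      unfolding K_def using norm_semigroup_apply_le[OF N(1)] by blast
    then show ?case
      unfolding dist_norm diff_zero using elim N(2) by linarith
  qed
qed

lemma bounded_power_sum_apply:
  assumes "(\<lambda>n. norm (bop_apply (ergodic_mean n) u)) \<in> O(\<lambda>n. 1 / real n)"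
  obtains K where "\<And>n. norm (bop_apply (power_sum n) u) \<le> K"
proof -
  obtain C where "C > 0"
    and "eventually (\<lambda>n. norm (bop_apply (ergodic_mean n) u) \<le> C / real n) sequentially"
    using assms by (elim landau_o.bigE) (simp add: divide_inverse)
  then obtain N0 where N0: "\<And>n. n \<ge> N0 \<Longrightarrow> norm (bop_apply (ergodic_mean n) u) \<le> C / real n"
    unfolding eventually_sequentially by blast
  have "norm (bop_apply (power_sum n) u) \<le> max C (real N0 * norm u)" for n
  proof (cases "n < N0")
    case True
    have "norm (bop_apply (power_sum n) u) \<le> real n * norm u"
      using norm_bop_apply_le[of "power_sum n" u] norm_power_sum_le[of n]
      by (meson mult_right_mono norm_ge_zero order_trans)
    also have "\<dots> \<le> real N0 * norm u"
      using True by (intro mult_right_mono) auto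
    finally show ?thesis by simp
  next
    case False
    show ?thesis
    proof (cases "n = 0")
      case False
      then have "power_sum n = real n *\<^sub>R ergodic_mean n"
        by (simp add: ergodic_mean_def)
      then have "norm (bop_apply (power_sum n) u) = real n * norm (bop_apply (ergodic_mean n) u)"
        by (simp add: bop_apply_scaleR)
      also have "\<dots> \<le> real n * (C / real n)"
        using N0 \<open>\<not> n < N0\<close> by (intro mult_left_mono) auto
      finally show ?thesis
        using False by simp
    qed (use \<open>C > 0\<close> in \<open>simp add: power_sum_def le_max_iff_disj\<close>)
  qed
  then show ?thesis by (rule that)
qed

lemma norm_mean_power_sum_apply_le:
  assumes "\<And>n. norm (bop_apply (power_sum n) u) \<le> K" and "N \<ge> 1"
  shows "norm (bop_apply (mean_power_sum N) u) \<le> K"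
proof -
  have "norm (bop_apply (mean_power_sum N) u) \<le> (1 / real N) * (\<Sum>n=1..N. norm (bop_apply (power_sum n) u))"
    by (simp add: mean_power_sum_def bop_apply_scaleR bop_apply_sum norm_sum divide_right_mono)
  also have "\<dots> \<le> (1 / real N) * (\<Sum>n=1..N. K)"
    by (intro mult_left_mono sum_mono assms(1)) simp
  finally show ?thesis
    using assms(2) by simp
qed

text \<open>Choosing \<open>N \<approx> t\<close> in the decomposition of the semigroup.\<close>
lemma semigroup_apply_bigo:
  assumes "(\<lambda>n. norm (bop_apply (ergodic_mean n) u)) \<in> O(\<lambda>n. 1 / real n)"
  shows "(\<lambda>t. norm (bop_apply (semigroup t) u)) \<in> O(\<lambda>t. 1 / t)"
proof -
  obtain K where K: "\<And>n. norm (bop_apply (power_sum n) u) \<le> K"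
    using bounded_power_sum_apply[OF assms] by blast
  have bound: "norm (bop_apply (semigroup t) u) \<le> (norm u + 2 * K) / t" if "t \<ge> 1" for t
  proof -
    define N where "N = nat \<lceil>t\<rceil>"
    have "t \<le> real N"
      unfolding N_def by (rule real_nat_ceiling_ge)
    then have N: "N \<ge> 1"
      using that by linarith
    have "norm (bop_apply (ergodic_mean N) u) \<le> K / real N"
      using K[of N] N by (simp add: ergodic_mean_def bop_apply_scaleR divide_right_mono)
    also have "\<dots> \<le> K / t"
      using \<open>t \<le> real N\<close> that order_trans[OF norm_ge_zero K] by (intro divide_left_mono) auto
    finally have "norm (bop_apply (ergodic_mean N) u) \<le> K / t" .
    moreover have "norm (u + bop_apply (mean_power_sum N) u) \<le> norm u + K"
      using norm_triangle_ineq[of u "bop_apply (mean_power_sum N) u"]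
        norm_mean_power_sum_apply_le[OF K N] by linarith
    then have "norm (u + bop_apply (mean_power_sum N) u) / t \<le> (norm u + K) / t"
      using that by (intro divide_right_mono) auto
    ultimately show ?thesis
      using norm_semigroup_apply_le[OF N, of t u] that by (simp add: add_divide_distrib)
  qed
  have "eventually (\<lambda>t. norm (norm (bop_apply (semigroup t) u)) \<le> (norm u + 2 * K) * norm (1 / t)) at_top"
    using eventually_ge_at_top[of "1::real"] by eventually_elim (simp add: bound)
  then show ?thesis
    by (rule bigoI)
qed

lemma fixed_point_of_tendsto_semigroup_apply:
  assumes "((\<lambda>t. bop_apply (semigroup t) u) \<longlongrightarrow> w) at_top"
  shows "bop_apply T w = w"
proof -
  have "((\<lambda>t. bop_apply (T - 1) (bop_apply (semigroup t) u)) \<longlongrightarrow> bop_apply (T - 1) w) at_top"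
    by (rule bounded_linear.tendsto[OF bounded_linear_bop_apply assms])
  moreover have "((\<lambda>t. bop_apply (T - 1) (bop_apply (semigroup t) u)) \<longlongrightarrow> 0) at_top"
  proof (rule Lim_null_comparison)
    show "eventually (\<lambda>t. norm (bop_apply (T - 1) (bop_apply (semigroup t) u)) \<le> norm u / t) at_top"
      using eventually_gt_at_top[of 0]
    proof eventually_elim
      case (elim t)
      have "bop_apply (T - 1) (bop_apply (semigroup t) u) = bop_apply (semigroup t * (T - 1)) u"
        by (simp add: semigroup_def exp_times_scaleR_commute flip: bop_apply_mult)
      also have "norm \<dots> \<le> 1 / t * norm u"
        using norm_exp_mult_generator_le[OF elim] norm_bop_apply_le
        by (metis mult_right_mono norm_ge_zero order_trans semigroup_def)
      finally show ?case by simp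
    qed
  qed (rule tendsto_const_div_at_top)
  ultimately have "bop_apply (T - 1) w = 0"
    using tendsto_unique by (metis trivial_limit_at_top_linorder)
  then show ?thesis
    by (simp add: bop_apply_diff)
qed

lemma tendsto_semigroup_apply:
  assumes v: "bop_apply T v = v"
    and "((\<lambda>n. bop_apply (ergodic_mean n) u) \<longlongrightarrow> v) sequentially"
  shows "((\<lambda>t. bop_apply (semigroup t) u) \<longlongrightarrow> v) at_top"
proof -
  have "eventually (\<lambda>n. bop_apply (ergodic_mean n) u - v = bop_apply (ergodic_mean n) (u - v)) sequentially"
    using eventually_ge_at_top[of 1]
    by eventually_elim (simp add: bop_apply_diff_right ergodic_mean_apply_fixed[OF v])
  moreover have "((\<lambda>n. bop_apply (ergodic_mean n) u - v) \<longlongrightarrow> 0) sequentially"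
    using assms(2) by (rule LIM_zero)
  ultimately have "((\<lambda>n. bop_apply (ergodic_mean n) (u - v)) \<longlongrightarrow> 0) sequentially"
    by (simp only: tendsto_cong)
  then have "((\<lambda>t. bop_apply (semigroup t) (u - v)) \<longlongrightarrow> 0) at_top"
    by (rule tendsto_semigroup_apply_zero)
  moreover have "eventually (\<lambda>t. bop_apply (semigroup t) (u - v) = bop_apply (semigroup t) u - v) at_top"
    using eventually_ge_at_top[of 0]
    by eventually_elim (simp add: bop_apply_diff_right semigroup_apply_fixed[OF v])
  ultimately have "((\<lambda>t. bop_apply (semigroup t) u - v) \<longlongrightarrow> 0) at_top"
    by (simp only: tendsto_cong)
  then show ?thesis
    by (rule LIM_zero_cancel)
qed

lemma semigroup_apply_diff_bigo:
  assumes v: "bop_apply T v = v"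
    and "(\<lambda>n. norm (bop_apply (ergodic_mean n) u - v)) \<in> O(\<lambda>n. 1 / real n)"
  shows "(\<lambda>t. norm (bop_apply (semigroup t) u - v)) \<in> O(\<lambda>t. 1 / t)"
proof -
  have "eventually (\<lambda>n. norm (bop_apply (ergodic_mean n) u - v) = norm (bop_apply (ergodic_mean n) (u - v))) sequentially"
    using eventually_ge_at_top[of 1]
    by eventually_elim (simp add: bop_apply_diff_right ergodic_mean_apply_fixed[OF v])
  with assms(2) have "(\<lambda>n. norm (bop_apply (ergodic_mean n) (u - v))) \<in> O(\<lambda>n. 1 / real n)"
    by (simp only: landau_o.big.in_cong)
  then have "(\<lambda>t. norm (bop_apply (semigroup t) (u - v))) \<in> O(\<lambda>t. 1 / t)"
    by (rule semigroup_apply_bigo)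
  moreover have "eventually (\<lambda>t. norm (bop_apply (semigroup t) (u - v)) = norm (bop_apply (semigroup t) u - v)) at_top"
    using eventually_ge_at_top[of 0]
    by eventually_elim (simp add: bop_apply_diff_right semigroup_apply_fixed[OF v])
  ultimately show ?thesis
    by (simp only: landau_o.big.in_cong)
qed

text \<open>\<open>M\<^sub>n u\<close> is close to \<open>semigroup t (M\<^sub>n u) = M\<^sub>n (semigroup t u)\<close> because
  \<open>(T - 1) M\<^sub>n = O(1/n)\<close>, and \<open>M\<^sub>n\<close> fixes \<open>w\<close>.\<close>
lemma norm_ergodic_mean_apply_diff_le:
  assumes w: "bop_apply T w = w" and "t \<ge> 0" and "n \<ge> 1"
  shows "norm (bop_apply (ergodic_mean n) u - w)
    \<le> t * (2 / real n * norm u) + norm (bop_apply (semigroup t) u - w)"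
proof -
  let ?M = "ergodic_mean n" and ?E = "semigroup t"
  have "bop_apply ?M w = w"
    using assms by (simp add: ergodic_mean_apply_fixed)
  moreover have "bop_apply ?M (bop_apply ?E u) = bop_apply ?E (bop_apply ?M u)"
    by (simp add: semigroup_ergodic_mean_commute flip: bop_apply_mult)
  ultimately have split: "bop_apply ?M u - w
      = (bop_apply ?M u - bop_apply ?E (bop_apply ?M u)) + bop_apply ?M (bop_apply ?E u - w)"
    by (simp add: bop_apply_diff_right)
  have "norm (bop_apply (T - 1) (bop_apply ?M u)) \<le> norm ((T - 1) * ?M) * norm u"
    unfolding bop_apply_mult[symmetric] by (rule norm_bop_apply_le)
  also have "\<dots> \<le> 2 / real n * norm u"
    by (intro mult_right_mono norm_generator_mult_ergodic_mean_le) simp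
  finally have "t * norm (bop_apply (T - 1) (bop_apply ?M u)) \<le> t * (2 / real n * norm u)"
    using \<open>t \<ge> 0\<close> by (rule mult_left_mono)
  then have "norm (bop_apply ?M u - bop_apply ?E (bop_apply ?M u)) \<le> t * (2 / real n * norm u)"
    using norm_semigroup_apply_diff_le[OF \<open>t \<ge> 0\<close>, of "bop_apply ?M u"]
    by (simp add: norm_minus_commute)
  moreover have "norm (bop_apply ?M (bop_apply ?E u - w)) \<le> norm ?M * norm (bop_apply ?E u - w)"
    by (rule norm_bop_apply_le)
  then have "norm (bop_apply ?M (bop_apply ?E u - w)) \<le> norm (bop_apply ?E u - w)"
    using norm_ergodic_mean_le[of n] by (simp add: mult_left_le_one_le order_trans)
  ultimately show ?thesis
    unfolding split by (intro order_trans[OF norm_triangle_ineq] add_mono)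
qed

lemma tendsto_ergodic_mean_apply:
  assumes lim: "((\<lambda>t. bop_apply (semigroup t) u) \<longlongrightarrow> w) at_top"
  shows "((\<lambda>n. bop_apply (ergodic_mean n) u) \<longlongrightarrow> w) sequentially"
proof (rule tendstoI)
  fix e :: real
  assume "e > 0"
  have w: "bop_apply T w = w"
    using lim by (rule fixed_point_of_tendsto_semigroup_apply)
  have "eventually (\<lambda>t. t \<ge> 0 \<and> dist (bop_apply (semigroup t) u) w < e/2) at_top"
    using eventually_ge_at_top[of 0] tendstoD[OF lim half_gt_zero[OF \<open>e > 0\<close>]]
    by eventually_elim simp
  then obtain t where t: "t \<ge> 0" "norm (bop_apply (semigroup t) u - w) < e/2"
    using eventually_happens'[OF trivial_limit_at_top_linorder] by (auto simp: dist_norm)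
  have "((\<lambda>n. t * (2 / real n * norm u)) \<longlongrightarrow> 0) sequentially"
    using tendsto_divide_0[OF tendsto_const[of "t * (2 * norm u)"]
        filterlim_at_top_imp_at_infinity[OF filterlim_real_sequentially]]
    by simp
  from order_tendstoD(2)[OF this half_gt_zero[OF \<open>e > 0\<close>]]
  show "eventually (\<lambda>n. dist (bop_apply (ergodic_mean n) u) w < e) sequentially"
    using eventually_ge_at_top[of 1]
  proof eventually_elim
    case (elim n)
    then show ?case
      using norm_ergodic_mean_apply_diff_le[OF w t(1) elim(2), of u] t(2) by (simp add: dist_norm)
  qed
qed

end

section \<open>Bounded sequences on the integers\<close>

text \<open>The library proves completeness only for metric domains, and \<open>int\<close> carries no metric.\<close>
instance bcontfun :: (topological_space, complete_space) complete_space
proof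
  fix f :: "nat \<Rightarrow> ('a, 'b) bcontfun"
  assume "Cauchy f"
  then obtain g where "uniform_limit UNIV f g sequentially"
    using uniformly_convergent_eq_cauchy[of "\<lambda>_. True" f]
    unfolding Cauchy_def uniform_limit_sequentially_iff
    by (metis dist_fun_lt_imp_dist_val_lt)
  from uniform_limit_bcontfunE[OF this sequentially_bot]
  show "convergent f"
    by (metis convergentI)
qed

instance bcontfun :: (topological_space, banach) banach ..

lemma norm_const_bcontfun [simp]:
  "norm (const_bcontfun c :: ('a::topological_space, 'b::real_normed_vector) bcontfun) = norm c"
  by (rule antisym[OF norm_bound]) (use norm_bounded[of "const_bcontfun c"] in simp_all)

instance bcontfun :: (topological_space, real_normed_algebra_1) perfect_space
proof
  fix x :: "('a, 'b) bcontfun"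
  have "\<exists>y. dist y x < e \<and> y \<noteq> x" if "e > 0" for e
  proof (intro exI conjI)
    let ?y = "x + const_bcontfun (of_real (e/2))"
    show "dist ?y x < e"
      using that by (simp add: dist_norm)
    show "?y \<noteq> x"
      using that by (metis add_cancel_left_right const_bcontfun_0_eq_0 const_bcontfun.rep_eq
          half_gt_zero less_irrefl of_real_eq_0_iff)
  qed
  then show "\<not> open {x}"
    by (auto simp: open_dist)
qed

lemma apply_Bcontfun_int:
  "bounded (range f) \<Longrightarrow> apply_bcontfun (Bcontfun (f :: int \<Rightarrow> 'a::metric_space)) = f"
  by (simp add: Bcontfun_inverse bcontfun_def)

lemma apply_bcontfun_sum: "apply_bcontfun (sum f I) k = (\<Sum>i\<in>I. apply_bcontfun (f i) k)"
  by (induction I rule: infinite_finite_induct) simp_all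

lemma bounded_linear_apply_bcontfun_at:
  "bounded_linear (\<lambda>f :: ('a::topological_space, 'b::real_normed_vector) bcontfun. apply_bcontfun f k)"
  by (rule bounded_linear_intro[where K = 1]) (auto intro: norm_bounded)

lemma uniform_limit_const_iff_tendsto:
  "uniform_limit UNIV (\<lambda>i. apply_bcontfun (f i)) (\<lambda>k. c) F \<longleftrightarrow> (f \<longlongrightarrow> const_bcontfun c) F"
proof
  assume "uniform_limit UNIV (\<lambda>i. apply_bcontfun (f i)) (\<lambda>k. c) F"
  then show "(f \<longlongrightarrow> const_bcontfun c) F"
    by (intro uniform_limit_tendsto_bcontfun) (simp add: const_bcontfun.rep_eq)
next
  assume "(f \<longlongrightarrow> const_bcontfun c) F"
  from tendsto_bcontfun_uniform_limit[OF this]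
  show "uniform_limit UNIV (\<lambda>i. apply_bcontfun (f i)) (\<lambda>k. c) F"
    by (simp add: const_bcontfun.rep_eq)
qed

lemma SUP_norm_diff_const:
  fixes w :: "('a::topological_space, 'b::real_normed_vector) bcontfun"
  shows "(SUP k. norm (apply_bcontfun w k - c)) = norm (w - const_bcontfun c)"
  by (simp add: norm_bcontfun_def dist_bcontfun.rep_eq dist_norm)

lemma bounded_const_increments_imp_const:
  fixes f :: "int \<Rightarrow> 'a::real_normed_vector"
  assumes bounded: "bounded (range f)"
    and increments: "\<And>k. f (k + 1) - f k = f k - f (k - 1)"
  shows "f k = f 0"
proof -
  define d where "d = f 1 - f 0"
  have step: "f (k + 1) - f k = d" for k
  proof (induction k rule: int_induct[where k = 0])
    case (step1 i) then show ?case using increments[of "i + 1"] by simp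
  next
    case (step2 i) then show ?case using increments[of i] by simp
  qed (simp add: d_def)
  have linear: "f k = f 0 + of_int k *\<^sub>R d" for k
  proof (induction k rule: int_induct[where k = 0])
    case (step1 i) then show ?case using step[of i] by (simp add: algebra_simps)
  next
    case (step2 i) then show ?case using step[of "i - 1"] by (simp add: algebra_simps)
  qed simp
  obtain B where B: "\<And>k. norm (f k) \<le> B"
    using bounded by (auto simp: bounded_iff)
  have "d = 0"
  proof (rule ccontr)
    assume "d \<noteq> 0"
    then obtain n :: nat where n: "2 * B < real n * norm d"
      using ex_less_of_nat_mult[of "norm d" "2 * B"] by auto
    have "real n * norm d = norm (f (int n) - f 0)"
      using linear[of "int n"] by simp
    also have "\<dots> \<le> 2 * B"
      using norm_triangle_ineq4[of "f (int n)" "f 0"] B[of "int n"] B[of 0] by linarith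
    finally show False
      using n by simp
  qed
  then show ?thesis
    using linear[of k] by simp
qed

context
  includes bcontfun.lifting
begin

lift_definition translate :: "int \<Rightarrow> (int, 'a::real_normed_vector) bcontfun \<Rightarrow> (int, 'a) bcontfun"
  is "\<lambda>d f k. f (k + d)"
  by (auto simp: bcontfun_def intro: bounded_subset)

end

lemma bounded_linear_translate: "bounded_linear (translate d)"
  by (rule bounded_linear_intro[where K = 1])
     (auto intro!: bcontfun_eqI norm_bound norm_bounded simp: translate.rep_eq)

type_synonym linf = "(int, complex) bcontfun"

definition shift :: "int \<Rightarrow> linf bop" where
  "shift d = bop_of_blinfun (Blinfun (translate d))"

lemma apply_shift [simp]: "apply_bcontfun (bop_apply (shift d) u) k = apply_bcontfun u (k + d)"
  by (simp add: shift_def bop_apply.rep_eq bop_of_blinfun_inverse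
      bounded_linear_Blinfun_apply[OF bounded_linear_translate] translate.rep_eq)

lemma shift_mult_shift: "shift d * shift (- d) = 1"
  by (rule bop_eqI, rule bcontfun_eqI) (simp add: bop_apply_mult)

lemma norm_shift_le: "norm (shift d) \<le> 1"
  by (intro norm_bop_le_one norm_bound) (simp add: norm_bounded)

section \<open>The rendezvous operator\<close>

text \<open>Since \<open>shift d u = u (\<cdot> + d)\<close>, the paper's \<open>S\<close> is \<open>shift (- 1)\<close>, and the generator
  \<open>(S + S\<^sup>-\<^sup>1)/2 - I\<close> of the rendezvous system is \<open>shift_mean - 1\<close>.\<close>
definition shift_mean :: "linf bop" where
  "shift_mean = (1/2) *\<^sub>R (shift (- 1) + shift 1)"

interpretation shift_mean: analytic_contraction shift_mean
proof
  show "norm shift_mean \<le> 1"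
    using norm_triangle_ineq[of "shift (- 1)" "shift 1"] norm_shift_le[of "- 1"] norm_shift_le[of 1]
    by (simp add: shift_mean_def)
  show "norm (exp (t *\<^sub>R (shift_mean - 1)) * (shift_mean - 1)) \<le> 1 / t" if "t > 0" for t
    unfolding shift_mean_def using that shift_mult_shift[of 1] shift_mult_shift[of "- 1"]
    by (intro norm_exp_mean_diff_one_mult_le norm_shift_le) simp_all
qed

lemma apply_shift_mean:
  "apply_bcontfun (bop_apply shift_mean u) k = (apply_bcontfun u (k - 1) + apply_bcontfun u (k + 1)) / 2"
  by (simp add: shift_mean_def bop_apply_scaleR bop_apply_add) (simp add: scaleR_conv_of_real)

lemma apply_shift_mean_diff_one: "apply_bcontfun (bop_apply (shift_mean - 1) u) = rdv_op (apply_bcontfun u)"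
  by (rule ext) (simp add: bop_apply_diff apply_shift_mean rdv_op_def shiftR_def shiftL_def)

lemma sum_binomial_Suc:
  fixes w :: "nat \<Rightarrow> 'a::comm_semiring_1"
  shows "(\<Sum>l\<le>Suc j. of_nat (Suc j choose l) * w l) = (\<Sum>l\<le>j. of_nat (j choose l) * (w l + w (Suc l)))"
proof -
  have "(\<Sum>l\<le>j. of_nat (j choose l) * w l) = (\<Sum>l\<le>Suc j. of_nat (j choose l) * w l)"
    by (simp add: binomial_eq_0)
  also have "\<dots> = w 0 + (\<Sum>l\<le>j. of_nat (j choose Suc l) * w (Suc l))"
    by (simp only: sum.atMost_Suc_shift) simp
  finally have "(\<Sum>l\<le>j. of_nat (j choose l) * w l) = w 0 + (\<Sum>l\<le>j. of_nat (j choose Suc l) * w (Suc l))" .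
  moreover have "(\<Sum>l\<le>Suc j. of_nat (Suc j choose l) * w l)
      = w 0 + (\<Sum>l\<le>j. of_nat (j choose l) * w (Suc l)) + (\<Sum>l\<le>j. of_nat (j choose Suc l) * w (Suc l))"
    by (simp only: sum.atMost_Suc_shift) (simp add: distrib_right sum.distrib add.assoc del: sum.atMost_Suc)
  ultimately show ?thesis
    by (simp add: distrib_left sum.distrib algebra_simps)
qed

lemma apply_shift_mean_power:
  "apply_bcontfun (bop_apply (shift_mean ^ j) u) k
     = (1 / 2 ^ j) * (\<Sum>l=0..j. of_nat (j choose l) * apply_bcontfun u (k - int j + 2 * int l))"
proof (induction j arbitrary: k u)
  case (Suc j)
  let ?w = "\<lambda>l. apply_bcontfun u (k - int (Suc j) + 2 * int l)"
  have "apply_bcontfun (bop_apply (shift_mean ^ Suc j) u) k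
      = apply_bcontfun (bop_apply (shift_mean ^ j) (bop_apply shift_mean u)) k"
    by (simp only: power_Suc2 bop_apply_mult)
  also have "\<dots> = (1 / 2 ^ j) * (\<Sum>l\<le>j. of_nat (j choose l) * ((?w l + ?w (Suc l)) / 2))"
    by (simp add: Suc.IH atLeast0AtMost apply_shift_mean algebra_simps)
  also have "\<dots> = (1 / 2 ^ Suc j) * (\<Sum>l\<le>j. of_nat (j choose l) * (?w l + ?w (Suc l)))"
    by (simp add: sum_divide_distrib[symmetric])
  also have "\<dots> = (1 / 2 ^ Suc j) * (\<Sum>l=0..Suc j. of_nat (Suc j choose l) * ?w l)"
    by (simp only: atLeast0AtMost sum_binomial_Suc)
  finally show ?case .
qed simp

lemma rdv_sol_eq_semigroup:
  assumes "bounded (range x0)"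
  shows "rdv_sol x0 = (\<lambda>t. apply_bcontfun (bop_apply (shift_mean.semigroup t) (Bcontfun x0)))"
proof (intro ext)
  fix t k
  have "bounded_linear (\<lambda>X. apply_bcontfun (bop_apply X (Bcontfun x0)) k)"
    by (rule bounded_linear_compose[OF bounded_linear_apply_bcontfun_at bounded_linear_bop_apply_left])
  then have "apply_bcontfun (bop_apply (shift_mean.semigroup t) (Bcontfun x0)) k
      = (\<Sum>n. apply_bcontfun (bop_apply ((t *\<^sub>R (shift_mean - 1)) ^ n /\<^sub>R fact n) (Bcontfun x0)) k)"
    unfolding shift_mean.semigroup_def exp_def by (rule bounded_linear.suminf[OF _ summable_exp_generic])
  also have "\<dots> = rdv_sol x0 t k"
    unfolding rdv_sol_def
  proof (rule suminf_cong)
    fix n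
    have "apply_bcontfun (bop_apply ((shift_mean - 1) ^ n) (Bcontfun x0)) = (rdv_op ^^ n) x0"
      by (induction n) (simp_all add: apply_Bcontfun_int[OF assms] bop_apply_mult
          apply_shift_mean_diff_one)
    then have "apply_bcontfun (bop_apply ((t *\<^sub>R (shift_mean - 1)) ^ n /\<^sub>R fact n) (Bcontfun x0)) k
        = (t ^ n / fact n) *\<^sub>R (rdv_op ^^ n) x0 k"
      by (simp add: bop_apply_scaleR divide_inverse mult.commute)
    then show "apply_bcontfun (bop_apply ((t *\<^sub>R (shift_mean - 1)) ^ n /\<^sub>R fact n) (Bcontfun x0)) k
        = complex_of_real (t ^ n / fact n) * (rdv_op ^^ n) x0 k"
      by (simp add: scaleR_conv_of_real)
  qed
  finally show "rdv_sol x0 t k = apply_bcontfun (bop_apply (shift_mean.semigroup t) (Bcontfun x0)) k" ..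
qed

lemma rdv_avg_eq_ergodic_mean:
  assumes "bounded (range x0)"
  shows "rdv_avg x0 = (\<lambda>n. apply_bcontfun (bop_apply (shift_mean.ergodic_mean n) (Bcontfun x0)))"
  by (intro ext) (simp add: rdv_avg_def shift_mean.ergodic_mean_def shift_mean.power_sum_def
      bop_apply_scaleR bop_apply_sum apply_shift_mean_power apply_Bcontfun_int[OF assms] apply_bcontfun_sum,
      simp add: scaleR_conv_of_real)

lemma shift_mean_const: "bop_apply shift_mean (const_bcontfun c) = const_bcontfun c"
  by (rule bcontfun_eqI) (simp add: apply_shift_mean)

lemma fixed_point_shift_mean_iff:
  "bop_apply shift_mean v = v \<longleftrightarrow> (\<exists>c. v = const_bcontfun c)"
proof
  assume fixed: "bop_apply shift_mean v = v"
  have mean: "(apply_bcontfun v (k - 1) + apply_bcontfun v (k + 1)) / 2 = apply_bcontfun v k" for k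
    using apply_shift_mean[of v k] by (simp add: fixed)
  have "apply_bcontfun v (k + 1) - apply_bcontfun v k = apply_bcontfun v k - apply_bcontfun v (k - 1)" for k
    using mean[of k] by (simp add: field_simps)
  then have "apply_bcontfun v k = apply_bcontfun v 0" for k
    by (rule bounded_const_increments_imp_const[OF bounded_apply_bcontfun])
  then have "v = const_bcontfun (apply_bcontfun v 0)"
    by (intro bcontfun_eqI) (simp add: const_bcontfun.rep_eq)
  then show "\<exists>c. v = const_bcontfun c" ..
next
  assume "\<exists>c. v = const_bcontfun c"
  then show "bop_apply shift_mean v = v"
    by (auto simp: shift_mean_const)
qed

theorem theorem3:
  fixes x0 :: "int \<Rightarrow> complex"
  assumes bdd: "bounded (range x0)"
  shows "(good x0 \<longleftrightarrow> (\<exists>c. uniform_limit UNIV (rdv_avg x0) (\<lambda>k. c) sequentially))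
    \<and> (\<forall>c. uniform_limit UNIV (rdv_avg x0) (\<lambda>k. c) sequentially
          \<longrightarrow> uniform_limit UNIV (rdv_sol x0) (\<lambda>k. c) at_top)
    \<and> (\<forall>c. (\<lambda>n. SUP k. cmod (rdv_avg x0 n k - c)) \<in> O(\<lambda>n. 1 / real n)
          \<longrightarrow> (\<lambda>t. SUP k. cmod (rdv_sol x0 t k - c)) \<in> O(\<lambda>t. 1 / t))"
proof -
  let ?u = "Bcontfun x0"
  note sol = rdv_sol_eq_semigroup[OF bdd] and avg = rdv_avg_eq_ergodic_mean[OF bdd]
  have convergence: "uniform_limit UNIV (rdv_sol x0) (\<lambda>k. c) at_top"
    if "uniform_limit UNIV (rdv_avg x0) (\<lambda>k. c) sequentially" for c
    using that unfolding sol avg uniform_limit_const_iff_tendsto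
    by (rule shift_mean.tendsto_semigroup_apply[OF shift_mean_const])
  have "\<exists>c. uniform_limit UNIV (rdv_avg x0) (\<lambda>k. c) sequentially" if good: "good x0"
  proof -
    obtain l where "uniform_limit UNIV (rdv_sol x0) l at_top"
      using good unfolding good_def by blast
    then obtain w where lim: "((\<lambda>t. bop_apply (shift_mean.semigroup t) ?u) \<longlongrightarrow> w) at_top"
      unfolding sol by (metis uniform_limit_bcontfunE trivial_limit_at_top_linorder)
    then have "bop_apply shift_mean w = w"
      by (rule shift_mean.fixed_point_of_tendsto_semigroup_apply)
    then obtain c where "w = const_bcontfun c"
      unfolding fixed_point_shift_mean_iff ..
    with shift_mean.tendsto_ergodic_mean_apply[OF lim] show ?thesis
      unfolding avg uniform_limit_const_iff_tendsto by blast
  qed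
  moreover have "(\<lambda>t. SUP k. cmod (rdv_sol x0 t k - c)) \<in> O(\<lambda>t. 1 / t)"
    if "(\<lambda>n. SUP k. cmod (rdv_avg x0 n k - c)) \<in> O(\<lambda>n. 1 / real n)" for c
    using that unfolding sol avg SUP_norm_diff_const
    by (rule shift_mean.semigroup_apply_diff_bigo[OF shift_mean_const])
  ultimately show ?thesis
    using convergence unfolding good_def by blast
qed

end
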